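(* Let $t,w,w',n,g$ be positive integers with $t\le w\le w'$. Suppose that there exists a $t$-resolvable Steiner system $\mathrm{S}(w,w',n)$. If there exists a large set $\mathrm{LGS}(t,w,w',g)$, then there exists a large set $\mathrm{LGS}(t,w,n,g)$.
   Context: A Steiner system $\mathrm{S}(s,k,n)$ is a pair $(X,\mathcal{B})$ with $|X|=n$ and $\mathcal{B}$ a family of $k$-subsets (blocks) of $X$ such that every $s$-subset of $X$ lies in exactly one block. An $\mathrm{S}(w,w',n)$ $(X,\mathcal{B})$ is $t$-resolvable ($t\le w$) if $\mathcal{B}$ can be partitioned into subfamilies each of which is the block set of an $\mathrm{S}(t,w',n)$ on $X$. For a set $Y$ of size $m$, let $X=Y\times[g]$ with groups $\{y\}\times[g]$. An H-design $\mathrm{H}(m,g,w,t)$ is a family of $w$-subsets (blocks) of $X$, each meeting every group in at most one point, such that every $t$-subset of $X$ with points in $t$ distinct groups lies in exactly one block. A block $\{(y_1,a_1),\dots,(y_w,a_w)\}$ is identified with the word indexed by $Y$ over $\{0\}\cup[g]$ having entry $a_s$ at coordinate $y_s$ and $0$ elsewhere. A generalized Steiner system $\mathrm{GS}(t,w,m,g)$ is an $\mathrm{H}(m,g,w,t)$ in which any two distinct blocks have Hamming distance at least $2(w-t)+1$. A large set $\mathrm{LGS}(t,w,m,g)$ is a partition of the set of all $w$-subsets of $Y\times[g]$ meeting each group in at most one point into block sets of $\mathrm{GS}(t,w,m,g)$'s (on the same groups). *)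

theory Defs
  imports Main "HOL-Library.Disjoint_Sets"
begin

definition steiner_system :: "nat \<Rightarrow> nat \<Rightarrow> 'a set \<Rightarrow> 'a set set \<Rightarrow> bool" where
  "steiner_system s k X B \<longleftrightarrow>
     (\<forall>b\<in>B. b \<subseteq> X \<and> card b = k) \<and>
     (\<forall>S. S \<subseteq> X \<and> card S = s \<longrightarrow> (\<exists>!b. b \<in> B \<and> S \<subseteq> b))"

definition t_resolvable :: "nat \<Rightarrow> nat \<Rightarrow> nat \<Rightarrow> 'a set \<Rightarrow> 'a set set \<Rightarrow> bool" where
  "t_resolvable t w w' X B \<longleftrightarrow> steiner_system w w' X B \<and>
     (\<exists>P. partition_on B P \<and> (\<forall>C\<in>P. steiner_system t w' X C))"

(* points of Y x [g]; groups are {y} x [g] *)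
definition hpoints :: "'a set \<Rightarrow> nat \<Rightarrow> ('a \<times> nat) set" where
  "hpoints Y g = Y \<times> {1..g}"

definition transversal_sets :: "nat \<Rightarrow> 'a set \<Rightarrow> nat \<Rightarrow> ('a \<times> nat) set set" where
  "transversal_sets w Y g =
     {b. b \<subseteq> hpoints Y g \<and> card b = w \<and> (\<forall>y\<in>Y. card {a. (y, a) \<in> b} \<le> 1)}"

definition H_design :: "'a set \<Rightarrow> nat \<Rightarrow> nat \<Rightarrow> nat \<Rightarrow> ('a \<times> nat) set set \<Rightarrow> bool" where
  "H_design Y g w t B \<longleftrightarrow> B \<subseteq> transversal_sets w Y g \<and>
     (\<forall>S. S \<subseteq> hpoints Y g \<and> card S = t \<and> card (fst ` S) = t \<longrightarrow> (\<exists>!b. b \<in> B \<and> S \<subseteq> b))"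

(* the word indexed by Y over {0} \<union> [g] associated with a block *)
definition block_word :: "('a \<times> nat) set \<Rightarrow> 'a \<Rightarrow> nat" where
  "block_word b y = (if \<exists>a. (y, a) \<in> b then (THE a. (y, a) \<in> b) else 0)"

definition hamming :: "'a set \<Rightarrow> ('a \<times> nat) set \<Rightarrow> ('a \<times> nat) set \<Rightarrow> nat" where
  "hamming Y b c = card {y\<in>Y. block_word b y \<noteq> block_word c y}"

definition GS :: "nat \<Rightarrow> nat \<Rightarrow> 'a set \<Rightarrow> nat \<Rightarrow> ('a \<times> nat) set set \<Rightarrow> bool" where
  "GS t w Y g B \<longleftrightarrow> H_design Y g w t B \<and>
     (\<forall>b\<in>B. \<forall>c\<in>B. b \<noteq> c \<longrightarrow> hamming Y b c \<ge> 2 * (w - t) + 1)"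

definition LGS :: "nat \<Rightarrow> nat \<Rightarrow> 'a set \<Rightarrow> nat \<Rightarrow> ('a \<times> nat) set set set \<Rightarrow> bool" where
  "LGS t w Y g P \<longleftrightarrow> partition_on (transversal_sets w Y g) P \<and> (\<forall>B\<in>P. GS t w Y g B)"

definition LGS_exists :: "nat \<Rightarrow> nat \<Rightarrow> nat \<Rightarrow> nat \<Rightarrow> bool" where
  "LGS_exists t w m g \<longleftrightarrow> (\<exists>(Y::nat set) P. finite Y \<and> card Y = m \<and> LGS t w Y g P)"

end

theory Submission
  imports Defs
begin

(*
  Every block of the S(w,w',n) has w' points, so a copy of the given LGS(t,w,w',g) can be
  transported onto each block. Since every w-subset of points lies in exactly one block, the
  copies together partition all transversal w-sets of X x [g]. For a resolution class (an
  S(t,w',n)) and an index i, the union of the i-th GS over the blocks of the class is again a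
  GS: a t-set of coordinates lies in exactly one block of the class, and two words supported in
  distinct blocks have supports meeting in fewer than t points, hence differ in at least
  2(w-t)+2 coordinates. Classes times indices give the required large set.
*)

definition relabel :: "('a \<Rightarrow> 'b) \<Rightarrow> 'a \<times> nat \<Rightarrow> 'b \<times> nat" where
  "relabel h = map_prod h id"

lemma relabel_Pair [simp]: "relabel h (y, a) = (h y, a)"
  by (simp add: relabel_def)

lemma transversal_sets_subset: "T \<in> transversal_sets w Y g \<Longrightarrow> T \<subseteq> Y \<times> {1..g}"
  by (simp add: transversal_sets_def hpoints_def)

lemma inj_on_fst_transversal:
  assumes "T \<in> transversal_sets w Y g"
  shows "inj_on fst T"
proof (rule inj_onI)
  fix p q assume p: "p \<in> T" and q: "q \<in> T" and fst_eq: "fst p = fst q"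
  obtain y a b where pq: "p = (y, a)" "q = (y, b)"
    using fst_eq by (cases p, cases q) auto
  have T: "T \<subseteq> Y \<times> {1..g}" "\<forall>y\<in>Y. card {a. (y, a) \<in> T} \<le> 1"
    using assms by (auto simp: transversal_sets_def hpoints_def)
  have "finite {a. (y, a) \<in> T}"
    by (rule finite_subset[of _ "{1..g}"]) (use T in auto)
  moreover have "card {a. (y, a) \<in> T} \<le> Suc 0"
    using T p pq by auto
  ultimately have "a = b"
    using p q pq by (auto simp: card_le_Suc0_iff_eq)
  then show "p = q" using pq by simp
qed

lemma card_fst_transversal: "T \<in> transversal_sets w Y g \<Longrightarrow> card (fst ` T) = w"
  using card_image[OF inj_on_fst_transversal] by (auto simp: transversal_sets_def)

lemma transversal_sets_subset_iff:
  assumes "b \<subseteq> X"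
  shows "T \<in> transversal_sets w b g \<longleftrightarrow> T \<in> transversal_sets w X g \<and> fst ` T \<subseteq> b"
proof -
  define at_most_one where "at_most_one Y \<longleftrightarrow> (\<forall>y\<in>Y. card {a. (y, a) \<in> T} \<le> 1)" for Y
  have "at_most_one b \<longleftrightarrow> at_most_one X" if "fst ` T \<subseteq> b"
  proof -
    have "{a. (y, a) \<in> T} = {}" if "y \<notin> b" for y
      using that \<open>fst ` T \<subseteq> b\<close> by force
    then show ?thesis using assms unfolding at_most_one_def by fastforce
  qed
  moreover have "T \<subseteq> b \<times> {1..g} \<longleftrightarrow> T \<subseteq> X \<times> {1..g} \<and> fst ` T \<subseteq> b"
    using assms by force
  moreover have "T \<in> transversal_sets w Y g \<longleftrightarrow> T \<subseteq> Y \<times> {1..g} \<and> card T = w \<and> at_most_one Y" for Y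
    by (simp add: transversal_sets_def hpoints_def at_most_one_def)
  ultimately show ?thesis by (simp only:) argo
qed

lemma block_word_eq_0: "x \<notin> fst ` T \<Longrightarrow> block_word T x = 0"
  unfolding block_word_def by force

lemma block_word_transversal:
  assumes "T \<in> transversal_sets w Y g" "(x, a) \<in> T"
  shows "block_word T x = a"
proof -
  have "a' = a" if "(x, a') \<in> T" for a'
    using inj_onD[OF inj_on_fst_transversal[OF assms(1)], of "(x, a')" "(x, a)"] that assms(2)
    by simp
  then show ?thesis
    unfolding block_word_def using assms(2) by (metis the_equality)
qed

lemma hamming_restrict:
  assumes "b \<subseteq> X" "fst ` T1 \<subseteq> b" "fst ` T2 \<subseteq> b"
  shows "hamming X T1 T2 = hamming b T1 T2"
proof -
  have "block_word T1 x = block_word T2 x" if "x \<notin> b" for x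
    using that assms(2,3) by (metis block_word_eq_0 subsetD)
  then have "{x\<in>X. block_word T1 x \<noteq> block_word T2 x} = {x\<in>b. block_word T1 x \<noteq> block_word T2 x}"
    using assms(1) by blast
  then show ?thesis unfolding hamming_def by simp
qed

lemma hamming_transversal_ge:
  assumes "finite X" and T1: "T1 \<in> transversal_sets w X g" and T2: "T2 \<in> transversal_sets w X g"
  shows "2 * (w - card (fst ` T1 \<inter> fst ` T2)) \<le> hamming X T1 T2"
proof -
  define A where "A = fst ` T1"
  define B where "B = fst ` T2"
  have "A \<subseteq> X" "B \<subseteq> X"
    using transversal_sets_subset[OF T1] transversal_sets_subset[OF T2] by (auto simp: A_def B_def)
  then have fin: "finite A" "finite B" using assms(1) finite_subset by auto
  have nonzero: "block_word T x \<noteq> 0" if "T \<in> transversal_sets w X g" "x \<in> fst ` T" for T x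
    using that transversal_sets_subset[OF that(1)] block_word_transversal[OF that(1)] by force
  have "block_word T1 x \<noteq> block_word T2 x" if "x \<in> (A - B) \<union> (B - A)" for x
    using that nonzero[OF T1, of x] nonzero[OF T2, of x] block_word_eq_0[of x T1] block_word_eq_0[of x T2]
    unfolding A_def B_def by fastforce
  then have "(A - B) \<union> (B - A) \<subseteq> {x\<in>X. block_word T1 x \<noteq> block_word T2 x}"
    using \<open>A \<subseteq> X\<close> \<open>B \<subseteq> X\<close> by blast
  then have "card ((A - B) \<union> (B - A)) \<le> hamming X T1 T2"
    unfolding hamming_def by (rule card_mono[rotated]) (use assms(1) in auto)
  moreover have "card ((A - B) \<union> (B - A)) = card (A - B) + card (B - A)"
    by (rule card_Un_disjoint) (use fin in auto)
  moreover have "card A = w" "card B = w"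
    using card_fst_transversal[OF T1] card_fst_transversal[OF T2] by (auto simp: A_def B_def)
  ultimately show ?thesis
    using card_Diff_subset_Int[of A B] card_Diff_subset_Int[of B A] fin
    by (simp add: A_def B_def Int_commute)
qed

lemma inj_on_relabel: "inj_on h Y \<Longrightarrow> inj_on (relabel h) (Y \<times> A)"
  by (auto simp: inj_on_def)

lemma relabel_image_mem_iff:
  assumes "inj_on h Y" "T \<subseteq> Y \<times> UNIV" "y \<in> Y"
  shows "(h y, a) \<in> relabel h ` T \<longleftrightarrow> (y, a) \<in> T"
proof -
  have "(y, a) \<in> Y \<times> UNIV" using assms(3) by simp
  from inj_on_image_mem_iff[OF inj_on_relabel[OF assms(1)] this assms(2)] show ?thesis by simp
qed

lemma block_word_relabel:
  assumes "inj_on h Y" "T \<subseteq> Y \<times> UNIV" "y \<in> Y"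
  shows "block_word (relabel h ` T) (h y) = block_word T y"
  unfolding block_word_def using relabel_image_mem_iff[OF assms] by simp

lemma hamming_relabel:
  assumes "bij_betw h Y Z" "T1 \<subseteq> Y \<times> UNIV" "T2 \<subseteq> Y \<times> UNIV"
  shows "hamming Z (relabel h ` T1) (relabel h ` T2) = hamming Y T1 T2"
proof -
  have inj: "inj_on h Y" and Z: "Z = h ` Y" using assms(1) by (auto simp: bij_betw_def)
  have "{z\<in>Z. block_word (relabel h ` T1) z \<noteq> block_word (relabel h ` T2) z}
        = h ` {y\<in>Y. block_word T1 y \<noteq> block_word T2 y}"
    using block_word_relabel[OF inj assms(2)] block_word_relabel[OF inj assms(3)] Z by auto
  moreover have "inj_on h {y\<in>Y. block_word T1 y \<noteq> block_word T2 y}"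
    using inj by (rule inj_on_subset) blast
  ultimately show ?thesis
    unfolding hamming_def by (simp add: card_image)
qed

lemma relabel_inv_into_relabel:
  assumes "bij_betw h Y Z" "T \<subseteq> Y \<times> UNIV"
  shows "relabel (inv_into Y h) ` relabel h ` T = T"
proof -
  have "relabel (inv_into Y h) (relabel h p) = p" if "p \<in> T" for p
    using that assms(2) bij_betw_inv_into_left[OF assms(1)] by (cases p) auto
  then show ?thesis by (simp add: image_image)
qed

lemma relabel_relabel_inv_into:
  assumes "bij_betw h Y Z" "T \<subseteq> Z \<times> UNIV"
  shows "relabel h ` relabel (inv_into Y h) ` T = T"
proof -
  have "relabel h (relabel (inv_into Y h) p) = p" if "p \<in> T" for p
    using that assms(2) bij_betw_inv_into_right[OF assms(1)] by (cases p) auto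
  then show ?thesis by (simp add: image_image)
qed

lemma relabel_transversal:
  assumes "bij_betw h Y Z" "T \<in> transversal_sets w Y g"
  shows "relabel h ` T \<in> transversal_sets w Z g"
proof -
  have inj: "inj_on h Y" and Z: "Z = h ` Y" using assms(1) by (auto simp: bij_betw_def)
  have T: "T \<subseteq> Y \<times> {1..g}" "card T = w" "\<forall>y\<in>Y. card {a. (y, a) \<in> T} \<le> 1"
    using assms(2) by (auto simp: transversal_sets_def hpoints_def)
  have "relabel h ` T \<subseteq> Z \<times> {1..g}" using T(1) Z by auto
  moreover have "card (relabel h ` T) = w"
    using card_image[OF inj_on_subset[OF inj_on_relabel[OF inj] T(1)]] T(2) by simp
  moreover have "card {a. (h y, a) \<in> relabel h ` T} \<le> 1" if "y \<in> Y" for y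
  proof -
    have "{a. (h y, a) \<in> relabel h ` T} = {a. (y, a) \<in> T}"
      using relabel_image_mem_iff[OF inj _ that, of T] T(1) by auto
    then show ?thesis using T(3) that by simp
  qed
  ultimately show ?thesis
    using Z by (auto simp: transversal_sets_def hpoints_def)
qed

lemma bij_betw_relabel_transversal_sets:
  assumes "bij_betw h Y Z"
  shows "bij_betw ((`) (relabel h)) (transversal_sets w Y g) (transversal_sets w Z g)"
proof (rule bij_betw_imageI)
  have "inj_on ((`) (relabel h)) (Pow (Y \<times> UNIV))"
    using assms by (intro inj_on_image_Pow inj_on_relabel bij_betw_imp_inj_on)
  then show "inj_on ((`) (relabel h)) (transversal_sets w Y g)"
    by (rule inj_on_subset) (auto dest: transversal_sets_subset)
  have "T \<in> (`) (relabel h) ` transversal_sets w Y g" if T: "T \<in> transversal_sets w Z g" for T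
  proof
    show "T = relabel h ` relabel (inv_into Y h) ` T"
      using relabel_relabel_inv_into[OF assms] transversal_sets_subset[OF T] by auto
    show "relabel (inv_into Y h) ` T \<in> transversal_sets w Y g"
      by (rule relabel_transversal[OF bij_betw_inv_into[OF assms] T])
  qed
  then show "(`) (relabel h) ` transversal_sets w Y g = transversal_sets w Z g"
    using relabel_transversal[OF assms] by auto
qed

lemma H_design_transversal: "H_design Y g w t G \<Longrightarrow> G \<subseteq> transversal_sets w Y g"
  by (simp add: H_design_def)

lemma H_design_ex1_block:
  "H_design Y g w t G \<Longrightarrow> S \<subseteq> hpoints Y g \<Longrightarrow> card S = t \<Longrightarrow> card (fst ` S) = t
    \<Longrightarrow> \<exists>!T. T \<in> G \<and> S \<subseteq> T"
  by (simp add: H_design_def)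

lemma H_design_relabel:
  assumes bij: "bij_betw h Y Z" and H: "H_design Y g w t G"
  shows "H_design Z g w t ((`) (relabel h) ` G)"
proof -
  define h' where "h' = inv_into Y h"
  have bij': "bij_betw h' Z Y" unfolding h'_def by (rule bij_betw_inv_into[OF bij])
  have GY: "T \<subseteq> Y \<times> UNIV" if "T \<in> G" for T
    using transversal_sets_subset that H_design_transversal[OF H] by blast
  have "\<exists>!T. T \<in> (`) (relabel h) ` G \<and> S \<subseteq> T"
    if S: "S \<subseteq> hpoints Z g" "card S = t" "card (fst ` S) = t" for S
  proof -
    define S0 where "S0 = relabel h' ` S"
    have SZ: "S \<subseteq> Z \<times> {1..g}" using S(1) by (simp add: hpoints_def)
    have S_eq: "S = relabel h ` S0"
      using relabel_relabel_inv_into[OF bij, of S] SZ by (auto simp: S0_def h'_def)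
    have "S0 \<subseteq> hpoints Y g"
      using SZ bij_betw_apply[OF bij'] by (auto simp: S0_def hpoints_def)
    moreover have "card S0 = t"
      using card_image[OF inj_on_subset[OF inj_on_relabel[OF bij_betw_imp_inj_on[OF bij']] SZ]] S(2)
      by (simp add: S0_def)
    moreover have "card (fst ` S0) = t"
    proof -
      have "fst ` S0 = h' ` fst ` S" by (force simp: S0_def)
      moreover have "inj_on h' (fst ` S)"
        using bij_betw_imp_inj_on[OF bij'] by (rule inj_on_subset) (use SZ in auto)
      ultimately show ?thesis using S(3) by (simp add: card_image)
    qed
    ultimately obtain T0 where T0: "T0 \<in> G" "S0 \<subseteq> T0"
      and T0_unique: "\<And>T. T \<in> G \<Longrightarrow> S0 \<subseteq> T \<Longrightarrow> T = T0"
      using H_design_ex1_block[OF H] by metis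
    have S0_sub: "S0 \<subseteq> T" if "T \<in> G" "S \<subseteq> relabel h ` T" for T
    proof -
      have "S0 \<subseteq> relabel h' ` relabel h ` T" using that(2) by (auto simp: S0_def)
      then show ?thesis using relabel_inv_into_relabel[OF bij GY[OF that(1)]] by (simp add: h'_def)
    qed
    show ?thesis
    proof (rule ex1I)
      show "relabel h ` T0 \<in> (`) (relabel h) ` G \<and> S \<subseteq> relabel h ` T0"
        using T0 S_eq by blast
    next
      fix T assume "T \<in> (`) (relabel h) ` G \<and> S \<subseteq> T"
      then obtain T1 where "T1 \<in> G" "T = relabel h ` T1" "S \<subseteq> relabel h ` T1" by blast
      then show "T = relabel h ` T0" using S0_sub T0_unique by blast
    qed
  qed
  moreover have "(`) (relabel h) ` G \<subseteq> transversal_sets w Z g"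
    using H_design_transversal[OF H] relabel_transversal[OF bij] by auto
  ultimately show ?thesis by (simp add: H_design_def)
qed

lemma GS_relabel:
  assumes bij: "bij_betw h Y Z" and G: "GS t w Y g G"
  shows "GS t w Z g ((`) (relabel h) ` G)"
proof -
  have H: "H_design Y g w t G" using G by (simp add: GS_def)
  have GY: "T \<subseteq> Y \<times> UNIV" if "T \<in> G" for T
    using transversal_sets_subset that H_design_transversal[OF H] by blast
  have "2 * (w - t) + 1 \<le> hamming Z (relabel h ` T1) (relabel h ` T2)"
    if "T1 \<in> G" "T2 \<in> G" "relabel h ` T1 \<noteq> relabel h ` T2" for T1 T2
    using G that hamming_relabel[OF bij GY[OF that(1)] GY[OF that(2)]] unfolding GS_def by auto
  then show ?thesis
    using H_design_relabel[OF bij H] by (auto simp: GS_def)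
qed

lemma LGS_relabel:
  assumes bij: "bij_betw h Y Z" and Q: "LGS t w Y g Q"
  shows "LGS t w Z g ((`) ((`) (relabel h)) ` Q)"
proof -
  let ?f = "(`) (relabel h)"
  have f: "bij_betw ?f (transversal_sets w Y g) (transversal_sets w Z g)"
    by (rule bij_betw_relabel_transversal_sets[OF bij])
  have part: "partition_on (transversal_sets w Y g) Q"
    using Q unfolding LGS_def by blast
  have "partition_on (?f ` transversal_sets w Y g) ((`) ?f ` Q - {{}})"
    using partition_on_inj_image[OF part bij_betw_imp_inj_on[OF f]] .
  moreover have "(`) ?f ` Q - {{}} = (`) ?f ` Q"
    using partition_onD3[OF part] by auto
  ultimately have "partition_on (transversal_sets w Z g) ((`) ?f ` Q)"
    using bij_betw_imp_surj_on[OF f] by simp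
  then show ?thesis
    using Q GS_relabel[OF bij] unfolding LGS_def by blast
qed

lemma inj_on_relabel_LGS:
  assumes "bij_betw h Y Z" "LGS t w Y g Q"
  shows "inj_on ((`) ((`) (relabel h))) Q"
proof (rule inj_on_image)
  have "\<Union> Q = transversal_sets w Y g"
    using assms(2) unfolding LGS_def partition_on_def by blast
  then show "inj_on ((`) (relabel h)) (\<Union> Q)"
    using bij_betw_imp_inj_on[OF bij_betw_relabel_transversal_sets[OF assms(1)]] by simp
qed

lemma partition_on_mem_eq: "partition_on A P \<Longrightarrow> p \<in> P \<Longrightarrow> q \<in> P \<Longrightarrow> x \<in> p \<Longrightarrow> x \<in> q \<Longrightarrow> p = q"
  using disjointD[OF partition_onD2] by blast

lemma steiner_system_block_subset: "steiner_system s k X B \<Longrightarrow> b \<in> B \<Longrightarrow> b \<subseteq> X"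
  by (simp add: steiner_system_def)

lemma steiner_system_ex1_block:
  "steiner_system s k X B \<Longrightarrow> S \<subseteq> X \<Longrightarrow> card S = s \<Longrightarrow> \<exists>!b. b \<in> B \<and> S \<subseteq> b"
  by (simp add: steiner_system_def)

lemma steiner_system_card_Int_less:
  assumes "steiner_system t k X C" "b \<in> C" "b' \<in> C" "b \<noteq> b'"
  shows "card (b \<inter> b') < t"
proof (rule ccontr)
  assume "\<not> card (b \<inter> b') < t"
  then obtain S where S: "S \<subseteq> b \<inter> b'" "card S = t"
    by (meson not_less obtain_subset_with_card_n)
  moreover have "S \<subseteq> X" using S steiner_system_block_subset[OF assms(1,2)] by blast
  ultimately have "\<exists>!c. c \<in> C \<and> S \<subseteq> c" "S \<subseteq> b" "S \<subseteq> b'"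
    using steiner_system_ex1_block[OF assms(1)] by auto
  then show False using assms(2-4) by blast
qed

lemma transversal_sets_ex1_block:
  assumes B: "steiner_system w k X B" and T: "T \<in> transversal_sets w X g"
  shows "\<exists>!b. b \<in> B \<and> T \<in> transversal_sets w b g"
proof -
  have "fst ` T \<subseteq> X" using transversal_sets_subset[OF T] by auto
  then have "\<exists>!b. b \<in> B \<and> fst ` T \<subseteq> b"
    using steiner_system_ex1_block[OF B] card_fst_transversal[OF T] by simp
  moreover have "T \<in> transversal_sets w b g \<longleftrightarrow> fst ` T \<subseteq> b" if "b \<in> B" for b
    using transversal_sets_subset_iff[OF steiner_system_block_subset[OF B that]] T by simp
  ultimately show ?thesis by (simp cong: conj_cong)
qed

lemma H_design_block_transversal:
  assumes "H_design b g w t G" "b \<subseteq> X" "T \<in> G"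
  shows "T \<in> transversal_sets w X g \<and> fst ` T \<subseteq> b"
  using transversal_sets_subset_iff[OF assms(2)] H_design_transversal[OF assms(1)] assms(3) by blast

lemma H_design_Union_steiner_system:
  assumes C: "steiner_system t k X C" and D: "\<And>b. b \<in> C \<Longrightarrow> H_design b g w t (D b)"
  shows "H_design X g w t (\<Union>b\<in>C. D b)"
proof -
  have D_transversal: "T \<in> transversal_sets w X g \<and> fst ` T \<subseteq> b" if "b \<in> C" "T \<in> D b" for b T
    using H_design_block_transversal[OF D steiner_system_block_subset[OF C]] that by blast
  have "\<exists>!T. T \<in> (\<Union>b\<in>C. D b) \<and> S \<subseteq> T"
    if S: "S \<subseteq> hpoints X g" "card S = t" "card (fst ` S) = t" for S
  proof -
    have "fst ` S \<subseteq> X" using S(1) by (auto simp: hpoints_def)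
    then obtain b where b: "b \<in> C" "fst ` S \<subseteq> b"
      and b_unique: "\<And>b'. b' \<in> C \<Longrightarrow> fst ` S \<subseteq> b' \<Longrightarrow> b' = b"
      using steiner_system_ex1_block[OF C _ S(3)] by metis
    have "S \<subseteq> hpoints b g" using S(1) b(2) by (force simp: hpoints_def)
    then obtain T where T: "T \<in> D b" "S \<subseteq> T"
      and T_unique: "\<And>T'. T' \<in> D b \<Longrightarrow> S \<subseteq> T' \<Longrightarrow> T' = T"
      using H_design_ex1_block[OF D[OF b(1)] _ S(2,3)] by metis
    show ?thesis
    proof (rule ex1I)
      show "T \<in> (\<Union>b\<in>C. D b) \<and> S \<subseteq> T" using T b(1) by blast
    next
      fix T' assume "T' \<in> (\<Union>b\<in>C. D b) \<and> S \<subseteq> T'"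
      then obtain b' where b': "b' \<in> C" "T' \<in> D b'" "S \<subseteq> T'" by blast
      then have "fst ` S \<subseteq> b'" using D_transversal[OF b'(1,2)] by blast
      then have "b' = b" using b_unique b'(1) by blast
      then show "T' = T" using T_unique b' by blast
    qed
  qed
  moreover have "(\<Union>b\<in>C. D b) \<subseteq> transversal_sets w X g" using D_transversal by blast
  ultimately show ?thesis by (simp add: H_design_def)
qed

lemma GS_Union_steiner_system:
  assumes C: "steiner_system t k X C" and X: "finite X" and "t \<le> w"
    and D: "\<And>b. b \<in> C \<Longrightarrow> GS t w b g (D b)"
  shows "GS t w X g (\<Union>b\<in>C. D b)"
proof -
  have H: "H_design b g w t (D b)" if "b \<in> C" for b
    using D[OF that] by (simp add: GS_def)
  have D_transversal: "T \<in> transversal_sets w X g \<and> fst ` T \<subseteq> b" if "b \<in> C" "T \<in> D b" for b T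
    using H_design_block_transversal[OF H steiner_system_block_subset[OF C]] that by blast
  have far: "2 * (w - t) + 1 \<le> hamming X T1 T2"
    if b1: "b1 \<in> C" "T1 \<in> D b1" and b2: "b2 \<in> C" "T2 \<in> D b2" and "T1 \<noteq> T2" for b1 T1 b2 T2
  proof (cases "b1 = b2")
    case True
    then have "2 * (w - t) + 1 \<le> hamming b1 T1 T2"
      using D[OF b1(1)] that unfolding GS_def by blast
    also have "hamming b1 T1 T2 = hamming X T1 T2"
      using hamming_restrict[OF steiner_system_block_subset[OF C b1(1)]] True
        D_transversal[OF b1] D_transversal[OF b2] by simp
    finally show ?thesis .
  next
    case False
    have "card (fst ` T1 \<inter> fst ` T2) \<le> card (b1 \<inter> b2)"
      using D_transversal[OF b1] D_transversal[OF b2] finite_subset[OF _ X]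
        steiner_system_block_subset[OF C b1(1)]
      by (intro card_mono) auto
    also have "\<dots> < t"
      by (rule steiner_system_card_Int_less[OF C b1(1) b2(1) False])
    finally show ?thesis
      using hamming_transversal_ge[OF X, of T1 w g T2] D_transversal[OF b1] D_transversal[OF b2]
        \<open>t \<le> w\<close> by linarith
  qed
  have "H_design X g w t (\<Union>b\<in>C. D b)"
    by (rule H_design_Union_steiner_system[OF C H])
  moreover have "\<forall>T1\<in>(\<Union>b\<in>C. D b). \<forall>T2\<in>(\<Union>b\<in>C. D b). T1 \<noteq> T2 \<longrightarrow> 2 * (w - t) + 1 \<le> hamming X T1 T2"
    using far by blast
  ultimately show ?thesis by (simp add: GS_def)
qed

lemma partition_on_transversal_sets_Union:
  assumes B: "steiner_system w k X B" and Pr: "partition_on B Pr"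
    and L: "\<And>b. b \<in> B \<Longrightarrow> partition_on (transversal_sets w b g) (L b ` I)"
    and L_inj: "\<And>b. b \<in> B \<Longrightarrow> inj_on (L b) I"
  shows "partition_on (transversal_sets w X g) ((\<lambda>(C, i). \<Union>b\<in>C. L b i) ` (Pr \<times> I))"
proof (rule partition_onI)
  have class_sub: "C \<subseteq> B" if "C \<in> Pr" for C
    using Pr that by (auto simp: partition_on_def)
  have L_sub: "L b i \<subseteq> transversal_sets w b g" if "b \<in> B" "i \<in> I" for b i
    using partition_onD1[OF L[OF that(1)]] that(2) by blast
  show "\<Union> ((\<lambda>(C, i). \<Union>b\<in>C. L b i) ` (Pr \<times> I)) = transversal_sets w X g"
  proof
    show "\<Union> ((\<lambda>(C, i). \<Union>b\<in>C. L b i) ` (Pr \<times> I)) \<subseteq> transversal_sets w X g"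
      using L_sub class_sub transversal_sets_subset_iff[OF steiner_system_block_subset[OF B]]
      by fastforce
    show "transversal_sets w X g \<subseteq> \<Union> ((\<lambda>(C, i). \<Union>b\<in>C. L b i) ` (Pr \<times> I))"
    proof
      fix T assume "T \<in> transversal_sets w X g"
      then obtain b where b: "b \<in> B" "T \<in> transversal_sets w b g"
        using transversal_sets_ex1_block[OF B] by metis
      obtain C where C: "C \<in> Pr" "b \<in> C"
        using partition_onD1[OF Pr] b(1) by blast
      obtain i where i: "i \<in> I" "T \<in> L b i"
        using partition_onD1[OF L[OF b(1)]] b(2) by blast
      show "T \<in> \<Union> ((\<lambda>(C, i). \<Union>b\<in>C. L b i) ` (Pr \<times> I))"
        using C i by blast
    qed
  qed
  show "disjnt p q"
    if p: "p \<in> (\<lambda>(C, i). \<Union>b\<in>C. L b i) ` (Pr \<times> I)" and q: "q \<in> (\<lambda>(C, i). \<Union>b\<in>C. L b i) ` (Pr \<times> I)"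
      and "p \<noteq> q" for p q
  proof (rule ccontr)
    obtain C i where Ci: "C \<in> Pr" "i \<in> I" "p = (\<Union>b\<in>C. L b i)" using p by blast
    obtain C' i' where Ci': "C' \<in> Pr" "i' \<in> I" "q = (\<Union>b\<in>C'. L b i')" using q by blast
    assume "\<not> disjnt p q"
    then obtain T b b' where T: "b \<in> C" "T \<in> L b i" "b' \<in> C'" "T \<in> L b' i'"
      unfolding disjnt_def Ci(3) Ci'(3) by blast
    have bB: "b \<in> B" "b' \<in> B" using T class_sub Ci(1) Ci'(1) by auto
    have Tb: "T \<in> transversal_sets w b g" "T \<in> transversal_sets w b' g"
      using L_sub[OF bB(1) Ci(2)] L_sub[OF bB(2) Ci'(2)] T by blast+
    then have "T \<in> transversal_sets w X g"
      using transversal_sets_subset_iff[OF steiner_system_block_subset[OF B bB(1)]] by blast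
    with Tb bB have "b = b'"
      using transversal_sets_ex1_block[OF B] by metis
    then have "C = C'" using partition_on_mem_eq[OF Pr Ci(1) Ci'(1)] T by blast
    moreover have "L b i = L b i'"
      using partition_on_mem_eq[OF L[OF bB(1)], of "L b i" "L b i'" T] Ci(2) Ci'(2) T \<open>b = b'\<close>
      by blast
    then have "i = i'" using inj_onD[OF L_inj[OF bB(1)]] Ci(2) Ci'(2) by blast
    ultimately show False using \<open>p \<noteq> q\<close> Ci Ci' by simp
  qed
  show "{} \<notin> (\<lambda>(C, i). \<Union>b\<in>C. L b i) ` (Pr \<times> I)"
  proof
    assume "{} \<in> (\<lambda>(C, i). \<Union>b\<in>C. L b i) ` (Pr \<times> I)"
    then obtain C i where Ci: "C \<in> Pr" "i \<in> I" "(\<Union>b\<in>C. L b i) = {}" by blast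
    obtain b where "b \<in> C" using partition_onD3[OF Pr] Ci(1) by fastforce
    then have "L b i = {}" using Ci(3) by blast
    then show False
      using partition_onD3[OF L] class_sub Ci(1,2) \<open>b \<in> C\<close> by blast
  qed
qed

lemma LGS_Union_t_resolvable:
  assumes B: "t_resolvable t w k X B" and X: "finite X" and "t \<le> w"
    and L: "\<And>b. b \<in> B \<Longrightarrow> LGS t w b g (L b ` I)"
    and L_inj: "\<And>b. b \<in> B \<Longrightarrow> inj_on (L b) I"
  shows "\<exists>P. LGS t w X g P"
proof -
  have B_steiner: "steiner_system w k X B" using B by (simp add: t_resolvable_def)
  obtain Pr where Pr: "partition_on B Pr" and classes: "\<And>C. C \<in> Pr \<Longrightarrow> steiner_system t k X C"
    using B unfolding t_resolvable_def by blast
  have "partition_on (transversal_sets w X g) ((\<lambda>(C, i). \<Union>b\<in>C. L b i) ` (Pr \<times> I))"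
    using partition_on_transversal_sets_Union[OF B_steiner Pr _ L_inj] L by (simp add: LGS_def)
  moreover have "GS t w X g (\<Union>b\<in>C. L b i)" if "C \<in> Pr" "i \<in> I" for C i
  proof (rule GS_Union_steiner_system[OF classes[OF that(1)] X \<open>t \<le> w\<close>])
    fix b assume "b \<in> C"
    then have "b \<in> B" using Pr that(1) by (auto simp: partition_on_def)
    then show "GS t w b g (L b i)" using L that(2) by (simp add: LGS_def)
  qed
  ultimately have "LGS t w X g ((\<lambda>(C, i). \<Union>b\<in>C. L b i) ` (Pr \<times> I))"
    by (auto simp: LGS_def)
  then show ?thesis ..
qed

theorem theorem3p2:
  fixes t w w' n g :: nat
  assumes "0 < t" "0 < w" "0 < w'" "0 < n" "0 < g"
    and "t \<le> w" "w \<le> w'"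
    and "\<exists>(X::nat set) B. finite X \<and> card X = n \<and> t_resolvable t w w' X B"
    and "LGS_exists t w w' g"
  shows "LGS_exists t w n g"
proof -
  obtain X :: "nat set" and B where X: "finite X" "card X = n" and B: "t_resolvable t w w' X B"
    using assms(8) by blast
  obtain Y :: "nat set" and Q where Y: "finite Y" "card Y = w'" and Q: "LGS t w Y g Q"
    using assms(9) unfolding LGS_exists_def by blast
  have "\<exists>h. bij_betw h Y b" if "b \<in> B" for b
  proof -
    have "b \<subseteq> X" "card b = w'"
      using B that unfolding t_resolvable_def steiner_system_def by blast+
    then show ?thesis using finite_same_card_bij[OF Y(1)] finite_subset X(1) Y(2) by metis
  qed
  then obtain h where h: "\<And>b. b \<in> B \<Longrightarrow> bij_betw (h b) Y b" by metis
  have "\<exists>P. LGS t w X g P"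
    using LGS_Union_t_resolvable[OF B X(1) \<open>t \<le> w\<close>, where L = "\<lambda>b. (`) ((`) (relabel (h b)))" and I = Q]
      LGS_relabel[OF h Q] inj_on_relabel_LGS[OF h Q] by blast
  then show ?thesis using X unfolding LGS_exists_def by blast
qed

end
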